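(* For all positive integers $n$: $|X_n|<\frac{C_1}{\lambda^{n/2}}$, $|Y_n|<\frac{C_1}{\lambda^{n/2}}$, $|Z_n|<\frac{2|\theta|}{\sqrt{3\theta^2-4p}}\cdot\frac{1}{\lambda^{n/2}}\le\frac{\sqrt2 C_1}{\lambda^{n/2}}$, and $|\lambda^n-(3\theta^2-p)c_n|<\frac{(1+\sqrt2)C_1}{\lambda^{n/2}}$.
   Context: Standing setup: $p,q\in\mathbb{Z}$ are such that $x^3-px-q$ is irreducible over $\mathbb{Q}$ with exactly one real root $\theta$ (one has $3\theta^2-4p>0$ and $3\theta^2-p>0$). $K=\mathbb{Q}(\theta)\subset\mathbb{R}$, $\mathcal{O}_K$ its ring of integers. $d$ is a positive integer with $\mathcal{O}_K\subseteq\frac1d\mathbb{Z}[\theta]$. $\lambda\in\mathcal{O}_K$ is a unit with $\lambda>1$. For $n\ge1$ the rationals $a_n,b_n,c_n$ are defined by $a_n+b_n\theta+c_n\theta^2=\lambda^n$, and $X_n=a_n+pc_n-b_n\theta$, $Y_n=a_n+pc_n-c_n\theta^2$, $Z_n=b_n\theta-c_n\theta^2$, $k_n=dc_n$. Constants: $C_1=\max\{\sqrt2,\ \frac{\sqrt2|\theta|}{\sqrt{3\theta^2-4p}}\}$, $C_2=\frac{\sqrt d}{\sqrt{3\theta^2-p}}$. *)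

theory Defs
  imports "HOL-Analysis.Analysis" "HOL-Computational_Algebra.Computational_Algebra"
begin

text \<open>The cubic number field K = Q(theta), for theta a real root of an irreducible cubic,
  written as the Q-span of 1, theta, theta^2 inside the reals.\<close>
definition cubic_field :: "real \<Rightarrow> real set" where
  "cubic_field \<theta> = {of_rat r0 + of_rat r1 * \<theta> + of_rat r2 * \<theta>^2 | r0 r1 r2. True}"

definition ring_of_integers :: "real set \<Rightarrow> real set" where
  "ring_of_integers K = {x \<in> K. algebraic_int x}"

definition is_unit_in :: "real set \<Rightarrow> real \<Rightarrow> bool" where
  "is_unit_in R x \<longleftrightarrow> x \<in> R \<and> x \<noteq> 0 \<and> inverse x \<in> R"

end

theory Submission
  imports Defs
begin

text \<open>Write \<open>\<alpha> = a + b\<theta> + c\<theta>^2\<close> and let \<open>\<sigma>\<close> be the complex embedding of \<open>K\<close>. The norm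
  \<open>N(\<alpha>) = \<alpha> |\<sigma>(\<alpha>)|^2\<close> is a rational polynomial in \<open>a, b, c\<close>. For the unit \<open>\<lambda>\<close> it is a rational
  integer, because all powers of the algebraic integer \<open>\<lambda>\<close> lie in one lattice
  \<open>E\<^sup>-\<^sup>1 \<int>[\<theta>]\<close>, so the powers \<open>N(\<lambda>)^k = N(\<lambda>^k)\<close> have bounded denominators; since
  \<open>N(\<lambda>) N(\<lambda>\<^sup>-\<^sup>1) = 1\<close> and \<open>N(\<lambda>) > 0\<close>, \<open>N(\<lambda>) = 1\<close>, i.e. \<open>|\<sigma>(\<lambda>^n)|^2 = \<lambda>\<^sup>-\<^sup>n\<close>.
  Writing \<open>\<sigma>(\<lambda>^n) = R + i \<surd>s I\<close> with \<open>s = 3\<theta>^2 - 4p\<close>, the quantities \<open>X\<^sub>n, Y\<^sub>n, Z\<^sub>n\<close> and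
  \<open>\<lambda>^n - (3\<theta>^2 - p) c\<^sub>n\<close> are \<open>R - \<theta>I, R + \<theta>I, 2\<theta>I, R + 3\<theta>I\<close>, and a weighted Cauchy-Schwarz
  inequality with \<open>R^2 + s I^2 = \<lambda>\<^sup>-\<^sup>n\<close> bounds each of them by a multiple of \<open>\<lambda>\<^sup>-\<^sup>n\<^sup>/\<^sup>2\<close>.\<close>

section \<open>Coordinates in the cubic field\<close>

type_synonym cubic_coords = "rat \<times> rat \<times> rat"

fun coord_eval :: "real \<Rightarrow> cubic_coords \<Rightarrow> real" where
  "coord_eval t (a, b, c) = of_rat a + of_rat b * t + of_rat c * t^2"

text \<open>The product reduced by \<open>\<theta>^3 = p\<theta> + q\<close> and \<open>\<theta>^4 = p\<theta>^2 + q\<theta>\<close>.\<close>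
fun coord_mult :: "int \<Rightarrow> int \<Rightarrow> cubic_coords \<Rightarrow> cubic_coords \<Rightarrow> cubic_coords" where
  "coord_mult p q (a, b, c) (a', b', c') =
     (a * a' + of_int q * (b * c' + c * b'),
      a * b' + b * a' + of_int p * (b * c' + c * b') + of_int q * c * c',
      a * c' + b * b' + c * a' + of_int p * c * c')"

fun coord_pow :: "int \<Rightarrow> int \<Rightarrow> cubic_coords \<Rightarrow> nat \<Rightarrow> cubic_coords" where
  "coord_pow p q g 0 = (1, 0, 0)"
| "coord_pow p q g (Suc k) = coord_mult p q (coord_pow p q g k) g"

text \<open>The other roots of \<open>x^3 - p x - q\<close> are \<open>\<theta>' = (-\<theta> \<plusminus> i \<surd>s) / 2\<close> with \<open>s = 3\<theta>^2 - 4p\<close>,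
  so the complex embedding \<open>\<sigma>\<close> sends \<open>a + b\<theta> + c\<theta>^2\<close> to \<open>conj_re + i \<surd>s conj_im\<close>.\<close>
fun conj_re :: "int \<Rightarrow> real \<Rightarrow> cubic_coords \<Rightarrow> real" where
  "conj_re p t (a, b, c) = of_rat a - of_rat b * t / 2 + of_rat c * (of_int p - t^2 / 2)"

fun conj_im :: "real \<Rightarrow> cubic_coords \<Rightarrow> real" where
  "conj_im t (a, b, c) = (of_rat b - of_rat c * t) / 2"

definition conj_norm_sq :: "int \<Rightarrow> real \<Rightarrow> cubic_coords \<Rightarrow> real" where
  "conj_norm_sq p t g = conj_re p t g ^ 2 + (3 * t^2 - 4 * of_int p) * conj_im t g ^ 2"

text \<open>The field norm: the determinant of multiplication by \<open>a + b\<theta> + c\<theta>^2\<close> on the basis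
  \<open>1, \<theta>, \<theta>^2\<close>.\<close>
fun cubic_norm :: "int \<Rightarrow> int \<Rightarrow> cubic_coords \<Rightarrow> rat" where
  "cubic_norm p q (a, b, c) =
     a * ((a + c * of_int p) * (a + c * of_int p) - (b * of_int p + c * of_int q) * b)
     - c * of_int q * (b * (a + c * of_int p) - (b * of_int p + c * of_int q) * c)
     + b * of_int q * (b * b - (a + c * of_int p) * c)"

definition cubic_lattice :: "real \<Rightarrow> nat \<Rightarrow> real set" where
  "cubic_lattice t E = {(of_int u + of_int v * t + of_int w * t^2) / real E | u v w. True}"

lemma coords_via_conj:
  fixes p :: int and a b c :: rat and t :: real
  shows "of_rat a + of_int p * of_rat c - of_rat b * t = conj_re p t (a, b, c) - t * conj_im t (a, b, c)"
    and "of_rat a + of_int p * of_rat c - of_rat c * t^2 = conj_re p t (a, b, c) + t * conj_im t (a, b, c)"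
    and "of_rat b * t - of_rat c * t^2 = 2 * t * conj_im t (a, b, c)"
    and "coord_eval t (a, b, c) - (3 * t^2 - of_int p) * of_rat c
           = conj_re p t (a, b, c) + 3 * t * conj_im t (a, b, c)"
  by (simp_all add: field_simps power2_eq_square)

lemma cubic_field_coords: "x \<in> cubic_field t \<Longrightarrow> \<exists>g. coord_eval t g = x"
  unfolding cubic_field_def by (auto intro: exI[of _ "(_, _, _)"])

lemma cubic_norm_homogeneous: "cubic_norm p q (e * a, e * b, e * c) = e^3 * cubic_norm p q (a, b, c)"
  by (simp add: power3_eq_cube) algebra

lemma cubic_norm_scaled_in_Ints:
  assumes "E > 0"
  shows "of_nat E ^ 3 * cubic_norm p q (of_int u / of_nat E, of_int v / of_nat E, of_int w / of_nat E) \<in> \<int>"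
proof -
  have "of_nat E * (of_int z / of_nat E) = (of_int z :: rat)" for z
    using assms by simp
  then have "of_nat E ^ 3 * cubic_norm p q (of_int u / of_nat E, of_int v / of_nat E, of_int w / of_nat E)
      = cubic_norm p q (of_int u, of_int v, of_int w)"
    by (simp only: cubic_norm_homogeneous[symmetric])
  then show ?thesis by simp
qed

section \<open>Integrality\<close>

lemma Ints_of_bounded_power_denominators:
  fixes r :: rat
  assumes M: "M > 0" and h: "\<And>k. r^k * of_nat M \<in> \<int>"
  shows "r \<in> \<int>"
proof -
  obtain n m where qo: "quotient_of r = (n, m)" by (cases "quotient_of r")
  have m0: "m > 0" using quotient_of_denom_pos[OF qo] .
  have r: "r = of_int n / of_int m" using quotient_of_div[OF qo] .
  have dvd: "m^k dvd int M" for k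
  proof -
    obtain z where z: "r^k * of_nat M = of_int z" using h by (meson Ints_cases)
    have "of_int (n^k * int M) = (of_int (z * m^k) :: rat)"
      using z m0 unfolding r by (simp add: power_divide field_simps)
    then have "m^k dvd n^k * int M" by (metis of_int_eq_iff dvd_triv_right)
    moreover have "coprime (m^k) (n^k)"
      using quotient_of_coprime[OF qo] by (simp add: coprime_commute)
    ultimately show ?thesis using coprime_dvd_mult_right_iff by blast
  qed
  have "m = 1"
  proof (rule ccontr)
    assume "m \<noteq> 1"
    then have "(2::int)^M \<le> m^M" using m0 by (simp add: power_mono)
    moreover have "m^M \<le> int M" using dvd[of M] M by (simp add: zdvd_imp_le)
    moreover have "int M < 2^M" by (metis less_exp of_nat_less_iff of_nat_numeral of_nat_power)
    ultimately show False by simp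
  qed
  then show ?thesis unfolding r by simp
qed

lemma Ints_mult_eq_1_nonneg:
  fixes x y :: "'a :: linordered_idom"
  assumes "x \<in> \<int>" "y \<in> \<int>" "x * y = 1" "x \<ge> 0"
  shows "x = 1"
proof -
  obtain m n where "x = of_int m" "y = of_int n" using assms(1,2) by (auto elim!: Ints_cases)
  with assms(3,4) have "m * n = 1" "m \<ge> 0" by (metis of_int_eq_1_iff of_int_mult, simp)
  then show ?thesis using \<open>x = of_int m\<close> zmult_eq_1_iff by auto
qed

lemma algebraic_int_power_span:
  fixes x :: "'a :: field"
  assumes "algebraic_int x"
  obtains m where "\<And>k. \<exists>e. (\<forall>j. e j \<in> \<int>) \<and> x^k = (\<Sum>j<m. e j * x^j)"
proof -
  from assms obtain P where P1: "lead_coeff P = 1" and P2: "\<forall>i. coeff P i \<in> \<int>"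
    and P3: "poly P x = 0"
    by (auto elim: algebraic_int.cases)
  define m where "m = degree P"
  have "m \<noteq> 0"
  proof
    assume "m = 0"
    then have "poly P x = 1" using P1 unfolding m_def by (simp add: poly_altdef)
    then show False using P3 by simp
  qed
  then obtain m' where m': "m = Suc m'" by (cases m) auto
  have "poly P x = (\<Sum>i<m. coeff P i * x^i) + x^m"
    unfolding poly_altdef m_def[symmetric] using P1 m_def
    by (simp add: lessThan_Suc_atMost[symmetric] m')
  then have xm: "x^m = - (\<Sum>i<m. coeff P i * x^i)"
    using P3 by (simp add: eq_neg_iff_add_eq_0 add.commute)
  have "\<exists>e. (\<forall>j. e j \<in> \<int>) \<and> x^k = (\<Sum>j<m. e j * x^j)" for k
  proof (induction k)
    case 0
    have "(\<Sum>j<m. (if j = 0 then 1 else 0) * x^j) = (\<Sum>j<m. if j = 0 then x^j else 0)"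
      by (rule sum.cong) auto
    also have "\<dots> = 1" using \<open>m \<noteq> 0\<close> by (simp add: sum.delta')
    finally show ?case by (intro exI[of _ "\<lambda>j. if j = 0 then 1 else 0"]) auto
  next
    case (Suc k)
    then obtain e where e1: "\<forall>j. e j \<in> \<int>" and e2: "x^k = (\<Sum>j<m. e j * x^j)" by blast
    define e' where "e' j = (if j = 0 then 0 else e (j - 1)) - e m' * coeff P j" for j
    have shift: "(\<Sum>j<m. (if j = 0 then 0 else e (j - 1)) * x^j) = (\<Sum>j<m'. e j * x^Suc j)"
      unfolding m' sum.lessThan_Suc_shift by simp
    have "x^Suc k = (\<Sum>j<m'. e j * x^Suc j) + e m' * x^m"
      by (simp add: e2 sum_distrib_left algebra_simps m')
    also have "\<dots> = (\<Sum>j<m. e' j * x^j)"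
      unfolding e'_def xm shift[symmetric]
      by (simp add: sum_subtractf left_diff_distrib sum_distrib_left mult.assoc)
    finally have "x^Suc k = (\<Sum>j<m. e' j * x^j)" .
    moreover have "\<forall>j. e' j \<in> \<int>" using e1 P2 unfolding e'_def by auto
    ultimately show ?case by blast
  qed
  then show ?thesis using that by blast
qed

lemma cubic_lattice_zero: "0 \<in> cubic_lattice t E"
  unfolding cubic_lattice_def by (rule CollectI, intro exI[of _ 0]) simp

lemma cubic_lattice_one: "1 \<in> cubic_lattice t 1"
  unfolding cubic_lattice_def by (rule CollectI, rule exI[of _ 1], intro exI[of _ 0]) simp

lemma cubic_lattice_add:
  assumes "x \<in> cubic_lattice t E" "y \<in> cubic_lattice t E"
  shows "x + y \<in> cubic_lattice t E"
proof -
  obtain u v w u' v' w' where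
    "x = (of_int u + of_int v * t + of_int w * t^2) / real E"
    "y = (of_int u' + of_int v' * t + of_int w' * t^2) / real E"
    using assms unfolding cubic_lattice_def by blast
  then have "x + y = (of_int (u + u') + of_int (v + v') * t + of_int (w + w') * t^2) / real E"
    by (simp add: add_divide_distrib algebra_simps)
  then show ?thesis unfolding cubic_lattice_def by blast
qed

lemma cubic_lattice_Ints_mult:
  assumes "x \<in> cubic_lattice t E" "e \<in> \<int>"
  shows "e * x \<in> cubic_lattice t E"
proof -
  obtain u v w where x: "x = (of_int u + of_int v * t + of_int w * t^2) / real E"
    using assms(1) unfolding cubic_lattice_def by blast
  obtain k where e: "e = of_int k" using assms(2) by (auto elim: Ints_cases)
  have "e * x = (of_int (k * u) + of_int (k * v) * t + of_int (k * w) * t^2) / real E"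
    unfolding x e by (simp add: algebra_simps)
  then show ?thesis unfolding cubic_lattice_def by blast
qed

lemma cubic_lattice_sum:
  fixes m :: nat
  assumes "\<And>j. j < m \<Longrightarrow> f j \<in> cubic_lattice t E"
  shows "(\<Sum>j<m. f j) \<in> cubic_lattice t E"
  using assms by (induction m) (auto intro: cubic_lattice_add cubic_lattice_zero)

lemma cubic_lattice_mult_denom:
  assumes "x \<in> cubic_lattice t E" "k > 0"
  shows "x \<in> cubic_lattice t (E * k)"
proof -
  obtain u v w where x: "x = (of_int u + of_int v * t + of_int w * t^2) / real E"
    using assms(1) unfolding cubic_lattice_def by blast
  have "x = (of_int (int k * u) + of_int (int k * v) * t + of_int (int k * w) * t^2) / real (E * k)"
    unfolding x using assms(2) by (cases "E = 0") (simp_all add: field_simps)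
  then show ?thesis unfolding cubic_lattice_def by blast
qed

section \<open>Inequalities for the conjugate\<close>

lemma weighted_cauchy_schwarz:
  fixes R I k s :: real
  shows "s * (R + k * I)^2 \<le> (s + k^2) * (R^2 + s * I^2)"
proof -
  have "(s + k^2) * (R^2 + s * I^2) - s * (R + k * I)^2 = (k * R - s * I)^2"
    by (simp add: power2_eq_square algebra_simps)
  then show ?thesis by (metis diff_ge_0_iff_ge zero_le_power2)
qed

lemma abs_less_of_weighted_sq:
  fixes x k s C \<rho> :: real
  assumes "s > 0" "\<rho> > 0" "C > 0" "s * x^2 \<le> (s + k) * \<rho>^2" "s + k < C^2 * s"
  shows "\<bar>x\<bar> < C * \<rho>"
proof -
  have "s * x^2 < s * (C * \<rho>)^2"
    using assms(4) mult_strict_right_mono[OF assms(5), of "\<rho>^2"] assms(2)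
    by (simp add: power_mult_distrib algebra_simps)
  then have "\<bar>x\<bar>^2 < (C * \<rho>)^2" using assms(1) by simp
  then show ?thesis by (rule power_less_imp_less_base) (use assms(2,3) in simp)
qed

lemma sqrt2_max_bounds:
  fixes \<theta> s :: real
  assumes s: "s > 0" and \<theta>: "\<theta>^2 \<noteq> s"
  defines "C \<equiv> max (sqrt 2) (sqrt 2 * \<bar>\<theta>\<bar> / sqrt s)"
  shows "C > 0" and "s + \<theta>^2 < C^2 * s" and "s + (3 * \<theta>)^2 < ((1 + sqrt 2) * C)^2 * s"
    and "2 * \<bar>\<theta>\<bar> / sqrt s \<le> sqrt 2 * C"
proof -
  have C_ge: "C \<ge> sqrt 2" "C \<ge> sqrt 2 * \<bar>\<theta>\<bar> / sqrt s" unfolding C_def by simp_all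
  show C_pos: "C > 0" using C_ge(1) by (meson less_le_trans real_sqrt_gt_0_iff zero_less_numeral)
  have "C^2 \<ge> 2" using power_mono[OF C_ge(1), of 2] by simp
  then have C2: "C^2 * s \<ge> 2 * s" using s by simp
  have "C^2 \<ge> (sqrt 2 * \<bar>\<theta>\<bar> / sqrt s)^2" using power_mono[OF C_ge(2), of 2] s by simp
  then have C\<theta>: "C^2 * s \<ge> 2 * \<theta>^2" using s by (simp add: power_divide power_mult_distrib field_simps)
  show "s + \<theta>^2 < C^2 * s"
    using C2 C\<theta> \<theta> by (cases "\<theta>^2 < s") linarith+
  have "(1 + sqrt 2)^2 = 3 + 2 * sqrt 2" by (simp add: power2_eq_square algebra_simps)
  then have five: "(1 + sqrt 2)^2 > 5" by simp
  have "s + (3 * \<theta>)^2 \<le> 5 * (C^2 * s)" using C2 C\<theta> by (simp add: power_mult_distrib)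
  also have "\<dots> < (1 + sqrt 2)^2 * (C^2 * s)"
    using five C_pos s by (intro mult_strict_right_mono) simp_all
  also have "\<dots> = ((1 + sqrt 2) * C)^2 * s" by (simp add: power_mult_distrib)
  finally show "s + (3 * \<theta>)^2 < ((1 + sqrt 2) * C)^2 * s" .
  have "2 * \<bar>\<theta>\<bar> / sqrt s = sqrt 2 * (sqrt 2 * \<bar>\<theta>\<bar> / sqrt s)" by simp
  also have "\<dots> \<le> sqrt 2 * C" by (rule mult_left_mono[OF C_ge(2)]) simp
  finally show "2 * \<bar>\<theta>\<bar> / sqrt s \<le> sqrt 2 * C" .
qed

lemma conj_bounds:
  fixes R I \<theta> s \<rho> :: real
  assumes s: "s > 0" and \<theta>: "\<theta> \<noteq> 0" "\<theta>^2 \<noteq> s" and \<rho>: "\<rho> > 0"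
    and RI: "R^2 + s * I^2 = \<rho>^2" and R: "R \<noteq> 0"
  defines "C \<equiv> max (sqrt 2) (sqrt 2 * \<bar>\<theta>\<bar> / sqrt s)"
  shows "\<bar>R - \<theta> * I\<bar> < C * \<rho>" and "\<bar>R + \<theta> * I\<bar> < C * \<rho>"
    and "\<bar>2 * \<theta> * I\<bar> < 2 * \<bar>\<theta>\<bar> / sqrt s * \<rho>"
    and "2 * \<bar>\<theta>\<bar> / sqrt s * \<rho> \<le> sqrt 2 * C * \<rho>"
    and "\<bar>R + 3 * \<theta> * I\<bar> < (1 + sqrt 2) * C * \<rho>"
proof -
  note C = sqrt2_max_bounds[OF s \<theta>(2), folded C_def]
  have CS: "s * (R + k * I)^2 \<le> (s + k^2) * \<rho>^2" for k
    using weighted_cauchy_schwarz[of s R k I] unfolding RI .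
  show "\<bar>R - \<theta> * I\<bar> < C * \<rho>"
    using abs_less_of_weighted_sq[OF s \<rho> C(1) _ C(2)] CS[of "-\<theta>"] by simp
  show "\<bar>R + \<theta> * I\<bar> < C * \<rho>"
    using abs_less_of_weighted_sq[OF s \<rho> C(1) _ C(2)] CS[of \<theta>] by simp
  have "(1 + sqrt 2) * C > 0" using C(1) by (intro mult_pos_pos add_pos_nonneg) simp_all
  then show "\<bar>R + 3 * \<theta> * I\<bar> < (1 + sqrt 2) * C * \<rho>"
    by (rule abs_less_of_weighted_sq[OF s \<rho> _ CS[of "3 * \<theta>"] C(3)])
  show "2 * \<bar>\<theta>\<bar> / sqrt s * \<rho> \<le> sqrt 2 * C * \<rho>"
    using C(4) by (rule mult_right_mono) (use \<rho> in simp)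
  \<comment> \<open>Strictness of the bound on \<open>Z\<close> needs \<open>R \<noteq> 0\<close>.\<close>
  have "R^2 > 0" using R by simp
  then have "s * I^2 < \<rho>^2" using RI by linarith
  then have "(sqrt s * \<bar>I\<bar>)^2 < \<rho>^2" using s by (simp add: power_mult_distrib)
  then have "sqrt s * \<bar>I\<bar> < \<rho>" by (rule power_less_imp_less_base) (use \<rho> in simp)
  then have "\<bar>I\<bar> < \<rho> / sqrt s" using s by (simp add: field_simps)
  then have "2 * \<bar>\<theta>\<bar> * \<bar>I\<bar> < 2 * \<bar>\<theta>\<bar> * (\<rho> / sqrt s)"
    using \<theta>(1) by (intro mult_strict_left_mono) simp_all
  then show "\<bar>2 * \<theta> * I\<bar> < 2 * \<bar>\<theta>\<bar> / sqrt s * \<rho>"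
    by (simp add: abs_mult)
qed

section \<open>Arithmetic modulo the cubic\<close>

locale cubic_root =
  fixes p q :: int and \<theta> :: real
  assumes root: "\<theta>^3 - of_int p * \<theta> - of_int q = 0"
begin

lemma of_int_q_eq: "real_of_int q = \<theta>^3 - of_int p * \<theta>"
  using root by simp

lemma coord_eval_mult: "coord_eval \<theta> (coord_mult p q g h) = coord_eval \<theta> g * coord_eval \<theta> h"
proof -
  obtain a b c a' b' c' where "g = (a, b, c)" "h = (a', b', c')" by (metis prod_cases3)
  then show ?thesis
    by (simp add: of_rat_add of_rat_mult of_int_q_eq algebra_simps power2_eq_square power3_eq_cube)
qed

lemma conj_re_mult:
  "conj_re p \<theta> (coord_mult p q g h) =
     conj_re p \<theta> g * conj_re p \<theta> h - (3 * \<theta>^2 - 4 * of_int p) * conj_im \<theta> g * conj_im \<theta> h"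
proof -
  obtain a b c a' b' c' where "g = (a, b, c)" "h = (a', b', c')" by (metis prod_cases3)
  then show ?thesis
    by (simp add: of_rat_add of_rat_mult of_int_q_eq field_simps power2_eq_square power3_eq_cube)
qed

lemma conj_im_mult:
  "conj_im \<theta> (coord_mult p q g h) = conj_re p \<theta> g * conj_im \<theta> h + conj_im \<theta> g * conj_re p \<theta> h"
proof -
  obtain a b c a' b' c' where "g = (a, b, c)" "h = (a', b', c')" by (metis prod_cases3)
  then show ?thesis
    by (simp add: of_rat_add of_rat_mult of_int_q_eq field_simps power2_eq_square power3_eq_cube)
qed

lemma conj_norm_sq_mult:
  "conj_norm_sq p \<theta> (coord_mult p q g h) = conj_norm_sq p \<theta> g * conj_norm_sq p \<theta> h"
  unfolding conj_norm_sq_def conj_re_mult conj_im_mult by algebra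

lemma conj_norm_sq_nonneg:
  assumes "3 * \<theta>^2 - 4 * of_int p \<ge> 0"
  shows "conj_norm_sq p \<theta> g \<ge> 0"
  using assms unfolding conj_norm_sq_def by simp

lemma of_rat_cubic_norm: "of_rat (cubic_norm p q g) = coord_eval \<theta> g * conj_norm_sq p \<theta> g"
proof -
  obtain a b c where "g = (a, b, c)" by (metis prod_cases3)
  then show ?thesis
    unfolding conj_norm_sq_def
    by (simp add: of_rat_add of_rat_mult of_rat_diff of_int_q_eq field_simps power2_eq_square
        power3_eq_cube)
qed

lemma cubic_norm_mult: "cubic_norm p q (coord_mult p q g h) = cubic_norm p q g * cubic_norm p q h"
proof -
  have "(of_rat (cubic_norm p q (coord_mult p q g h)) :: real)
      = of_rat (cubic_norm p q g * cubic_norm p q h)"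
    unfolding of_rat_mult of_rat_cubic_norm coord_eval_mult conj_norm_sq_mult by simp
  then show ?thesis by (simp only: of_rat_eq_iff)
qed

lemma coord_eval_pow: "coord_eval \<theta> (coord_pow p q g k) = coord_eval \<theta> g ^ k"
  by (induction k) (simp_all add: coord_eval_mult)

lemma cubic_norm_pow: "cubic_norm p q (coord_pow p q g k) = cubic_norm p q g ^ k"
  by (induction k) (simp_all add: cubic_norm_mult)

lemma cubic_lattice_mult:
  assumes "x \<in> cubic_lattice \<theta> E" "y \<in> cubic_lattice \<theta> E'"
  shows "x * y \<in> cubic_lattice \<theta> (E * E')"
proof -
  obtain u v w u' v' w' :: int where
    x: "x = (of_int u + of_int v * \<theta> + of_int w * \<theta>^2) / real E" and
    y: "y = (of_int u' + of_int v' * \<theta> + of_int w' * \<theta>^2) / real E'"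
    using assms unfolding cubic_lattice_def by blast
  have "x * y = coord_eval \<theta> (coord_mult p q (of_int u, of_int v, of_int w)
      (of_int u', of_int v', of_int w')) / real (E * E')"
    unfolding coord_eval_mult x y by simp
  also have "\<dots> = (of_int (u * u' + q * (v * w' + w * v'))
      + of_int (u * v' + v * u' + p * (v * w' + w * v') + q * w * w') * \<theta>
      + of_int (u * w' + v * v' + w * u' + p * w * w') * \<theta>^2) / real (E * E')"
    by (simp add: of_rat_add of_rat_mult)
  finally show ?thesis unfolding cubic_lattice_def by blast
qed

lemma cubic_lattice_power:
  assumes "x \<in> cubic_lattice \<theta> E"
  shows "x^k \<in> cubic_lattice \<theta> (E^k)"
proof (induction k)
  case 0
  then show ?case using cubic_lattice_one by simp
next
  case (Suc k)
  then show ?case using cubic_lattice_mult[OF Suc assms] by (simp add: mult.commute)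
qed

lemma algebraic_int_powers_in_cubic_lattice:
  assumes "algebraic_int x" "x \<in> cubic_lattice \<theta> d" "d > 0"
  shows "\<exists>E>0. \<forall>k. x^k \<in> cubic_lattice \<theta> E"
proof -
  obtain m where span: "\<And>k. \<exists>e. (\<forall>j. e j \<in> \<int>) \<and> x^k = (\<Sum>j<m. e j * x^j)"
    using algebraic_int_power_span[OF assms(1)] by blast
  have low: "x^j \<in> cubic_lattice \<theta> (d^m)" if "j < m" for j
  proof -
    have "x^j \<in> cubic_lattice \<theta> (d^j * d^(m - j))"
      using cubic_lattice_mult_denom[OF cubic_lattice_power[OF assms(2)]] assms(3) by simp
    then show ?thesis using that by (simp add: power_add[symmetric])
  qed
  have "x^k \<in> cubic_lattice \<theta> (d^m)" for k
  proof -
    obtain e where "\<forall>j. e j \<in> \<int>" "x^k = (\<Sum>j<m. e j * x^j)" using span by blast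
    then show ?thesis using low by (auto intro!: cubic_lattice_sum cubic_lattice_Ints_mult)
  qed
  then show ?thesis using assms(3) by (intro exI[of _ "d^m"]) simp
qed

end

section \<open>Consequences of irreducibility\<close>

locale irreducible_cubic_root = cubic_root +
  assumes irred: "irreducible ([:- of_int q, - of_int p, 0, 1:] :: rat poly)"
begin

lemma no_rat_factorization:
  fixes \<beta> \<gamma> :: rat
  assumes "of_int p = \<beta>^2 - \<gamma>" "of_int q = \<beta> * \<gamma>"
  shows False
proof -
  have "([:- of_int q, - of_int p, 0, 1:] :: rat poly) = [:\<gamma>, \<beta>, 1:] * [:-\<beta>, 1:]"
    by (simp add: assms power2_eq_square algebra_simps)
  from irreducibleD[OF irred this] have "[:\<gamma>, \<beta>, 1:] dvd 1 \<or> [:-\<beta>, 1:] dvd 1" .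
  then show False by (simp add: is_unit_iff_degree)
qed

lemma theta_not_rat: "\<theta> \<noteq> of_rat r"
proof
  assume r: "\<theta> = of_rat r"
  have "(of_rat (r^3 - of_int p * r - of_int q) :: real) = 0"
    using root r by (simp add: of_rat_diff of_rat_mult of_rat_power)
  then have "of_int q = r * (r^2 - of_int p)"
    by (simp add: algebra_simps power2_eq_square power3_eq_cube)
  then show False by (intro no_rat_factorization[of r "r^2 - of_int p"]) simp_all
qed

lemma theta_nonzero: "\<theta> \<noteq> 0"
  using theta_not_rat[of 0] by simp

lemma theta_sq_ne_two_p: "\<theta>^2 \<noteq> 2 * of_int p"
proof
  assume h: "\<theta>^2 = 2 * of_int p"
  have "\<theta>^3 = \<theta> * \<theta>^2" by (simp add: power2_eq_square power3_eq_cube)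
  then have "of_int p * \<theta> = of_int q" using root h by (simp add: algebra_simps)
  moreover have "p \<noteq> 0" using h theta_nonzero by auto
  ultimately have "\<theta> = of_rat (of_int q / of_int p)" by (simp add: of_rat_divide field_simps)
  then show False using theta_not_rat by blast
qed

text \<open>If \<open>w \<noteq> 0\<close>, the relation \<open>\<theta>^2 = -(\<beta> \<theta> + \<gamma>)\<close> reduces \<open>\<theta>^3 = p \<theta> + q\<close> to a rational linear
  relation for \<open>\<theta>\<close>, which is either trivial, giving a factorization, or makes \<open>\<theta>\<close> rational.\<close>
lemma coord_eval_eq_0:
  assumes z: "coord_eval \<theta> (u, v, w) = 0"
  shows "u = 0 \<and> v = 0 \<and> w = 0"
proof (cases "w = 0")
  case False
  define \<beta> \<gamma> where "\<beta> = v / w" and "\<gamma> = u / w"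
  have sq: "\<theta>^2 = - (of_rat \<beta> * \<theta> + of_rat \<gamma>)"
    using z False unfolding \<beta>_def \<gamma>_def by (simp add: of_rat_divide field_simps)
  have "\<theta>^3 = \<theta> * \<theta>^2" by (simp add: power2_eq_square power3_eq_cube)
  also have "\<dots> = \<theta> * - (of_rat \<beta> * \<theta> + of_rat \<gamma>)" by (simp only: sq)
  also have "\<dots> = - of_rat \<beta> * \<theta>^2 - of_rat \<gamma> * \<theta>" by (simp add: algebra_simps power2_eq_square)
  also have "\<dots> = of_rat \<beta> * (of_rat \<beta> * \<theta> + of_rat \<gamma>) - of_rat \<gamma> * \<theta>" by (simp only: sq)
  finally have key: "(of_rat (\<beta>^2 - \<gamma> - of_int p)) * \<theta> = (of_rat (of_int q - \<beta> * \<gamma>) :: real)"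
    using root by (simp add: of_rat_add of_rat_diff of_rat_mult of_rat_power algebra_simps power2_eq_square)
  show ?thesis
  proof (cases "\<beta>^2 - \<gamma> - of_int p = 0")
    case True
    then show ?thesis using key no_rat_factorization[of \<beta> \<gamma>] by simp
  next
    case False
    then have "\<theta> = of_rat ((of_int q - \<beta> * \<gamma>) / (\<beta>^2 - \<gamma> - of_int p))"
      using key by (simp add: of_rat_divide field_simps)
    then show ?thesis using theta_not_rat by blast
  qed
next
  case True
  show ?thesis
  proof (cases "v = 0")
    case False
    then have "\<theta> = of_rat (- u / v)"
      using z True by (simp add: of_rat_divide of_rat_minus field_simps)
    then show ?thesis using theta_not_rat by blast
  qed (use z True in simp)
qed

lemma coord_eval_inj: "coord_eval \<theta> g = coord_eval \<theta> h \<Longrightarrow> g = h"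
proof -
  assume e: "coord_eval \<theta> g = coord_eval \<theta> h"
  obtain a b c a' b' c' where gh: "g = (a, b, c)" "h = (a', b', c')" by (metis prod_cases3)
  have "coord_eval \<theta> (a - a', b - b', c - c') = 0"
    using e unfolding gh by (simp add: of_rat_diff algebra_simps)
  then have "a - a' = 0 \<and> b - b' = 0 \<and> c - c' = 0" by (rule coord_eval_eq_0)
  then show ?thesis unfolding gh by simp
qed

text \<open>A rational number is its own conjugate.\<close>
lemma conj_re_nonzero:
  assumes "coord_eval \<theta> g \<noteq> 0"
  shows "conj_re p \<theta> g \<noteq> 0"
proof
  assume re: "conj_re p \<theta> g = 0"
  obtain a b c where g: "g = (a, b, c)" by (metis prod_cases3)
  have "coord_eval \<theta> g = coord_eval \<theta> (3 * a + 2 * of_int p * c, 0, 0)"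
    using re unfolding g by (simp add: of_rat_add of_rat_mult field_simps)
  then have "g = (3 * a + 2 * of_int p * c, 0, 0)" by (rule coord_eval_inj)
  then show False using re assms g by auto
qed

lemma cubic_norm_pow_eq:
  assumes "coord_eval \<theta> h = coord_eval \<theta> g ^ k"
  shows "cubic_norm p q h = cubic_norm p q g ^ k"
proof -
  have "h = coord_pow p q g k" using assms by (intro coord_eval_inj) (simp add: coord_eval_pow)
  then show ?thesis by (simp add: cubic_norm_pow)
qed

text \<open>The powers of \<open>N(\<alpha>)\<close> are norms of elements of one lattice, so their denominators are
  bounded.\<close>
lemma cubic_norm_in_Ints:
  assumes "algebraic_int (coord_eval \<theta> g)" "coord_eval \<theta> g \<in> cubic_lattice \<theta> d" "d > 0"
  shows "cubic_norm p q g \<in> \<int>"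
proof -
  obtain E where E: "E > 0" "\<And>k. coord_eval \<theta> g ^ k \<in> cubic_lattice \<theta> E"
    using algebraic_int_powers_in_cubic_lattice[OF assms] by blast
  have "cubic_norm p q g ^ k * of_nat (E^3) \<in> \<int>" for k
  proof -
    obtain u v w :: int
      where uvw: "coord_eval \<theta> g ^ k = (of_int u + of_int v * \<theta> + of_int w * \<theta>^2) / real E"
      using E(2)[of k] unfolding cubic_lattice_def by blast
    let ?h = "(of_int u / of_nat E, of_int v / of_nat E, of_int w / of_nat E) :: cubic_coords"
    have "coord_eval \<theta> ?h = coord_eval \<theta> g ^ k"
      unfolding uvw by (simp add: of_rat_divide add_divide_distrib)
    then have "cubic_norm p q ?h = cubic_norm p q g ^ k"
      by (rule cubic_norm_pow_eq)
    then show ?thesis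
      using cubic_norm_scaled_in_Ints[OF E(1), of p q u v w] by (simp only: of_nat_power mult.commute)
  qed
  then show ?thesis
    by (rule Ints_of_bounded_power_denominators[rotated]) (use E(1) in simp)
qed

lemma three_theta_sq_gt_four_p:
  assumes uniq: "\<forall>x::real. x^3 - of_int p * x - of_int q = 0 \<longrightarrow> x = \<theta>"
  shows "3 * \<theta>^2 - 4 * of_int p > 0"
proof (rule ccontr)
  assume neg: "\<not> ?thesis"
  define \<sigma> where "\<sigma> = sqrt (4 * of_int p - 3 * \<theta>^2)"
  have \<sigma>: "\<sigma>^2 = 4 * of_int p - 3 * \<theta>^2" using neg unfolding \<sigma>_def by simp
  have factor: "x^3 - of_int p * x - of_int q = (x - \<theta>) * (x^2 + \<theta> * x + \<theta>^2 - of_int p)" for x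
    by (simp add: of_int_q_eq algebra_simps power2_eq_square power3_eq_cube)
  have other_root: "(-\<theta> + e * \<sigma>) / 2 = \<theta>" if "e^2 = 1" for e
  proof (rule uniq[rule_format])
    let ?x = "(-\<theta> + e * \<sigma>) / 2"
    have "?x^2 + \<theta> * ?x + \<theta>^2 - of_int p = 0"
      using \<sigma> that by (simp add: field_simps power2_eq_square)
    then show "?x^3 - of_int p * ?x - of_int q = 0" by (simp only: factor mult_zero_right)
  qed
  have "\<theta> = 0" using other_root[of 1] other_root[of "-1"] by simp
  then show False using theta_nonzero by simp
qed

lemma cubic_norm_of_unit:
  assumes "d > 0" and lattice: "ring_of_integers (cubic_field \<theta>) \<subseteq> cubic_lattice \<theta> d"
    and unit: "is_unit_in (ring_of_integers (cubic_field \<theta>)) u" and "u > 0"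
    and "3 * \<theta>^2 - 4 * of_int p \<ge> 0" and g: "coord_eval \<theta> g = u"
  shows "cubic_norm p q g = 1"
proof -
  have uO: "u \<in> ring_of_integers (cubic_field \<theta>)"
    and invO: "inverse u \<in> ring_of_integers (cubic_field \<theta>)"
    using unit unfolding is_unit_in_def by auto
  have norm_Ints: "cubic_norm p q h \<in> \<int>"
    if "coord_eval \<theta> h \<in> ring_of_integers (cubic_field \<theta>)" for h
    using cubic_norm_in_Ints[of h d] that lattice \<open>d > 0\<close> unfolding ring_of_integers_def by auto
  obtain g' where g': "coord_eval \<theta> g' = inverse u"
    using invO cubic_field_coords unfolding ring_of_integers_def by blast
  have "coord_mult p q g g' = (1, 0, 0)"
    by (rule coord_eval_inj) (use \<open>u > 0\<close> in \<open>simp only: coord_eval_mult g g', simp\<close>)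
  then have prod: "cubic_norm p q g * cubic_norm p q g' = 1"
    using cubic_norm_mult[of g g'] by simp
  have "(of_rat (cubic_norm p q g) :: real) \<ge> 0"
    unfolding of_rat_cubic_norm g using conj_norm_sq_nonneg[OF assms(5)] \<open>u > 0\<close> by simp
  then have nonneg: "cubic_norm p q g \<ge> 0" by simp
  have "cubic_norm p q g \<in> \<int>" "cubic_norm p q g' \<in> \<int>"
    using norm_Ints uO invO g g' by simp_all
  from Ints_mult_eq_1_nonneg[OF this prod nonneg] show ?thesis .
qed

lemma unit_power_conj_norm_sq:
  assumes "d > 0" and lattice: "ring_of_integers (cubic_field \<theta>) \<subseteq> cubic_lattice \<theta> d"
    and unit: "is_unit_in (ring_of_integers (cubic_field \<theta>)) u" and "u > 0"
    and "3 * \<theta>^2 - 4 * of_int p \<ge> 0" and g: "coord_eval \<theta> g = u ^ n"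
  shows "u ^ n * conj_norm_sq p \<theta> g = 1"
proof -
  obtain g1 where g1: "coord_eval \<theta> g1 = u"
    using unit cubic_field_coords unfolding is_unit_in_def ring_of_integers_def by blast
  have "cubic_norm p q g = cubic_norm p q g1 ^ n"
    using g g1 by (intro cubic_norm_pow_eq) simp
  also have "\<dots> = 1" using cubic_norm_of_unit[OF assms(1-5) g1] by simp
  finally show ?thesis using of_rat_cubic_norm[of g] g by simp
qed

end

theorem mainTheorem7:
  fixes p q :: int and \<theta> lam :: real and d :: nat and a b c :: "nat \<Rightarrow> rat"
  assumes irred: "irreducible ([:- of_int q, - of_int p, 0, 1:] :: rat poly)"
    and root: "\<theta>^3 - of_int p * \<theta> - of_int q = 0"
    and unique_real_root: "\<forall>x::real. x^3 - of_int p * x - of_int q = 0 \<longrightarrow> x = \<theta>"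
    and d_pos: "d > 0"
    and d_bound: "\<forall>x \<in> ring_of_integers (cubic_field \<theta>).
                    \<exists>u v w :: int. x = (of_int u + of_int v * \<theta> + of_int w * \<theta>^2) / real d"
    and unit: "is_unit_in (ring_of_integers (cubic_field \<theta>)) lam"
    and gt1: "lam > 1"
    and abc: "\<forall>n\<ge>1. of_rat (a n) + of_rat (b n) * \<theta> + of_rat (c n) * \<theta>^2 = lam^n"
  shows "\<forall>n\<ge>1.
    (let C1 = max (sqrt 2) (sqrt 2 * \<bar>\<theta>\<bar> / sqrt (3 * \<theta>^2 - 4 * of_int p));
         X = of_rat (a n) + of_int p * of_rat (c n) - of_rat (b n) * \<theta>;
         Y = of_rat (a n) + of_int p * of_rat (c n) - of_rat (c n) * \<theta>^2;
         Z = of_rat (b n) * \<theta> - of_rat (c n) * \<theta>^2;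
         h = lam powr (real n / 2)
     in \<bar>X\<bar> < C1 / h \<and> \<bar>Y\<bar> < C1 / h
        \<and> \<bar>Z\<bar> < 2 * \<bar>\<theta>\<bar> / sqrt (3 * \<theta>^2 - 4 * of_int p) * (1 / h)
        \<and> 2 * \<bar>\<theta>\<bar> / sqrt (3 * \<theta>^2 - 4 * of_int p) * (1 / h) \<le> sqrt 2 * C1 / h
        \<and> \<bar>lam^n - (3 * \<theta>^2 - of_int p) * of_rat (c n)\<bar> < (1 + sqrt 2) * C1 / h)"
proof (intro allI impI, goal_cases)
  case (1 n)
  interpret irreducible_cubic_root p q \<theta> using root irred by unfold_locales
  define s where "s = 3 * \<theta>^2 - 4 * of_int p"
  define g where "g = (a n, b n, c n)"
  define h where "h = lam powr (real n / 2)"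
  have s: "s > 0" unfolding s_def using unique_real_root by (rule three_theta_sq_gt_four_p)
  have g_val: "coord_eval \<theta> g = lam^n" using abc 1 unfolding g_def by simp
  have "ring_of_integers (cubic_field \<theta>) \<subseteq> cubic_lattice \<theta> d"
    using d_bound unfolding cubic_lattice_def by blast
  then have "lam^n * conj_norm_sq p \<theta> g = 1"
    using unit_power_conj_norm_sq[OF d_pos _ unit _ _ g_val] gt1 s unfolding s_def by simp
  moreover have "h^2 = lam^n"
    using gt1 unfolding h_def by (simp add: power2_eq_square powr_add[symmetric] powr_realpow)
  moreover have "lam^n \<noteq> 0" using gt1 by simp
  ultimately have "conj_norm_sq p \<theta> g = (1 / h)^2"
    by (simp add: power_one_over eq_divide_eq mult.commute)
  then have RI: "conj_re p \<theta> g ^ 2 + s * conj_im \<theta> g ^ 2 = (1 / h)^2"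
    unfolding conj_norm_sq_def s_def .
  have "\<theta>^2 \<noteq> s" "1 / h > 0" "coord_eval \<theta> g \<noteq> 0"
    using theta_sq_ne_two_p gt1 g_val unfolding s_def h_def by auto
  note bounds = conj_bounds[OF s theta_nonzero this(1,2) RI conj_re_nonzero[OF this(3)]]
  note coords = coords_via_conj[where a = "a n" and b = "b n" and c = "c n" and t = \<theta>, folded g_def]
  show ?case
    unfolding Let_def h_def[symmetric] s_def[symmetric] coords(1-3) coords(4)[unfolded g_val]
    using bounds by simp
qed

end
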